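(* As formal power series in $x$, $$\widehat B_1(x):=\frac{1}{\beta_1}\sum_{n\ge0}\beta_{n+1}x^n=\cfrac{1}{1+\cfrac{c_1x}{1+\cfrac{c_2x}{1+\cfrac{c_3x}{\ddots}}}}$$ where for $n\ge1$, $c_{2n-1}=\dfrac{q^n[n]_q^2[n+1]_q}{[2n]_q[2n+1]_q}$ and $c_{2n}=-\dfrac{[n]_q[n+1]_q^2}{[2n+1]_q[2n+2]_q}$.
   Context: $q$ is an indeterminate. The $q$-Bernoulli–Carlitz numbers $\beta_n\in\mathbb{Q}(q)$ are defined by: for all $n\ge0$, $q\sum_{k=0}^{n}\binom{n}{k}q^k\beta_k-\beta_n$ equals $q-1$ if $n=0$, $1$ if $n=1$, and $0$ if $n>1$ (so $\beta_1=-1/(q+1)$). $[m]_q=(q^m-1)/(q-1)$. *)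

theory Defs
  imports "HOL-Computational_Algebra.Computational_Algebra"
begin

type_synonym ratfun = "rat poly fract"

definition qvar :: ratfun where
  "qvar = Fract [:0, 1:] 1"

definition qint :: "nat \<Rightarrow> ratfun" where
  "qint m = (qvar ^ m - 1) / (qvar - 1)"

definition is_qBC :: "(nat \<Rightarrow> ratfun) \<Rightarrow> bool" where
  "is_qBC \<beta> \<longleftrightarrow> (\<forall>n. qvar * (\<Sum>k=0..n. of_nat (n choose k) * qvar ^ k * \<beta> k) - \<beta> n
      = (if n = 0 then qvar - 1 else if n = 1 then 1 else 0))"

definition cfc :: "nat \<Rightarrow> ratfun" where
  "cfc k = (if odd k then
             (let n = (k + 1) div 2 in
                qvar ^ n * qint n ^ 2 * qint (n + 1) / (qint (2*n) * qint (2*n + 1)))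
           else
             (let n = k div 2 in
                - (qint n * qint (n + 1) ^ 2 / (qint (2*n + 1) * qint (2*n + 2)))))"

text \<open>Truncated continued fraction:
  cfrac c i 0 = 1,  cfrac c i (m+1) = 1 / (1 + c_i x * cfrac c (i+1) m).
  So cfrac c 1 N = 1/(1 + c_1 x/(1 + ... /(1 + c_N x))).\<close>
fun cfrac :: "(nat \<Rightarrow> 'a::field) \<Rightarrow> nat \<Rightarrow> nat \<Rightarrow> 'a fps" where
  "cfrac c i 0 = 1"
| "cfrac c i (Suc m) = inverse (1 + fps_const (c i) * fps_X * cfrac c (Suc i) m)"

end

theory Submission
  imports Defs
begin

text \<open>
  Let \<open>L\<close> be the linear functional on polynomials with \<open>L(x\<^sup>k) = \<beta>\<^sub>k\<close>. The defining
  recurrence says \<open>q L(p(1 + q x)) - L(p) = (q - 1) p(0) + p'(0)\<close>, and since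
  \<open>[i]\<^sub>q + q\<^sup>i x\<close> and \<open>(x - [i]\<^sub>q)/q\<^sup>i\<close> are the q-integers \<open>[a + i]\<^sub>q\<close> and \<open>[a - i]\<^sub>q\<close> at
  \<open>x = [a]\<^sub>q\<close>, the substitution \<open>x \<mapsto> 1 + q x\<close> shifts the products
  \<open>\<prod>\<^sub>i\<^sub>\<le>\<^sub>k([i]\<^sub>q + q\<^sup>i x)\<close> and \<open>\<prod>\<^sub>i\<^sub>\<le>\<^sub>j(x - [i]\<^sub>q)/q\<^sup>i\<close> by one. This yields closed forms for
  the mixed moments \<open>L(x \<prod>\<^sub>i\<^sub>\<le>\<^sub>j(x - [i]\<^sub>q)/q\<^sup>i \<prod>\<^sub>i\<^sub>\<le>\<^sub>k([i]\<^sub>q + q\<^sup>i x))\<close>.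

  In the basis of the rising products we write down explicit polynomials \<open>P\<^sub>m\<close>, \<open>Q\<^sub>m\<close> of
  degree \<open>m\<close> satisfying \<open>P\<^sub>m = x Q\<^sub>m + c\<^sub>2\<^sub>m\<^sub>+\<^sub>2 P\<^sub>m\<^sub>+\<^sub>1\<close> and \<open>Q\<^sub>m = P\<^sub>m\<^sub>+\<^sub>1 + c\<^sub>2\<^sub>m\<^sub>+\<^sub>3 Q\<^sub>m\<^sub>+\<^sub>1\<close>.
  The closed form of the mixed moments together with two terminating q-hypergeometric
  summations shows \<open>L(x g P\<^sub>m) = L(x g x Q\<^sub>m) = 0\<close> for all \<open>g\<close> of degree below \<open>m\<close>.
  Hence the series \<open>K\<^sub>2\<^sub>m\<^sub>+\<^sub>1 = \<Sum>\<^sub>n L(x\<^sup>n\<^sup>+\<^sup>m\<^sup>+\<^sup>1 P\<^sub>m) t\<^sup>n / \<beta>\<^sub>1\<close> and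
  \<open>K\<^sub>2\<^sub>m\<^sub>+\<^sub>2 = \<Sum>\<^sub>n L(x\<^sup>n\<^sup>+\<^sup>m\<^sup>+\<^sup>2 Q\<^sub>m) t\<^sup>n / \<beta>\<^sub>1\<close> (with \<open>K\<^sub>0 = 1\<close>) have constant term 1 and satisfy
  \<open>K\<^sub>i = K\<^sub>i\<^sub>+\<^sub>1 + c\<^sub>i\<^sub>+\<^sub>1 t K\<^sub>i\<^sub>+\<^sub>2\<close>, so \<open>K\<^sub>i\<^sub>+\<^sub>1/K\<^sub>i = 1/(1 + c\<^sub>i\<^sub>+\<^sub>1 t K\<^sub>i\<^sub>+\<^sub>2/K\<^sub>i\<^sub>+\<^sub>1)\<close>, and the
  \<open>N\<close>-th convergent agrees with \<open>K\<^sub>1/K\<^sub>0\<close> up to order \<open>N\<close>.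
\<close>

abbreviation q :: ratfun where "q \<equiv> qvar"

lemma qvar_power: "q ^ n = to_fract (monom 1 n)"
proof -
  have "to_fract (x ^ k) = to_fract x ^ k" for x :: "rat poly" and k
    by (induction k) auto
  then show ?thesis
    by (simp add: qvar_def to_fract_def monom_altdef)
qed

lemma qvar_power_eq_1_iff: "q ^ n = 1 \<longleftrightarrow> n = 0"
proof -
  have "monom (1::rat) n = 1 \<longleftrightarrow> n = 0"
    by (metis degree_1 degree_monom_eq monom_eq_1 zero_neq_one)
  then show ?thesis
    by (metis qvar_power to_fract_1 to_fract_eq_iff)
qed

lemma qvar_neq_0 [simp]: "q \<noteq> 0"
  by (simp add: qvar_def Fract_conv_to_fract)

lemma qvar_power_neq_1 [simp]: "n > 0 \<Longrightarrow> q ^ n \<noteq> 1"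
  using qvar_power_eq_1_iff[of n] by simp

lemma qvar_neq_1 [simp]: "q \<noteq> 1"
  using qvar_power_eq_1_iff[of 1] by simp

lemma qint_0 [simp]: "qint 0 = 0"
  by (simp add: qint_def)

lemma qint_neq_0 [simp]: "n > 0 \<Longrightarrow> qint n \<noteq> 0"
  by (simp add: qint_def)

lemma qint_Suc_neq_0 [simp]: "qint (Suc n) \<noteq> 0"
  by simp

lemma qint_1 [simp]: "qint (Suc 0) = 1"
  by (simp add: qint_def)

lemma qint_Suc: "qint (Suc n) = qint n + q ^ n"
  unfolding qint_def by (simp add: divide_simps) (simp add: algebra_simps)

lemma power4_eq: "(x::'a::monoid_mult) ^ 4 = x * x * x * x"
  by (simp add: numeral_eq_Suc mult.assoc)

lemma power5_eq: "(x::'a::monoid_mult) ^ 5 = x * x * x * x * x"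
  by (simp add: numeral_eq_Suc mult.assoc)

text \<open>
  Rewriting with these rules and \<open>qint_def\<close> turns an identity between q-integers with
  symbolic arguments into a polynomial identity in \<open>q\<close> and the powers \<open>q\<^sup>m\<close>, \<open>q\<^sup>k\<close>, \<dots>,
  which \<open>algebra\<close> then decides.
\<close>
lemmas qpower_normalize = power_add power_Suc mult_2 power2_eq_square power3_eq_cube
  power4_eq power5_eq power_0 power_one_right

lemmas qpower_expand = power_add power_mult power2_eq_square power3_eq_cube power4_eq power5_eq

fun qfact :: "nat \<Rightarrow> ratfun" where
  "qfact 0 = 1"
| "qfact (Suc n) = qfact n * qint (Suc n)"

lemma qfact_neq_0 [simp]: "qfact n \<noteq> 0"
  by (induction n) auto

text \<open>The q-integer \<open>[-i]\<^sub>q = (q\<^sup>-\<^sup>i - 1)/(q - 1)\<close>.\<close>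
definition qint_neg :: "nat \<Rightarrow> ratfun" where
  "qint_neg i = - qint i / q ^ i"

fun qfact_neg :: "nat \<Rightarrow> ratfun" where
  "qfact_neg 0 = 1"
| "qfact_neg (Suc n) = qfact_neg n * qint_neg (Suc n)"


subsection \<open>The moment functional\<close>

definition moment :: "(nat \<Rightarrow> 'a::comm_ring_1) \<Rightarrow> 'a poly \<Rightarrow> 'a" where
  "moment \<beta> p = (\<Sum>k\<le>degree p. coeff p k * \<beta> k)"

lemma moment_upto:
  assumes "degree p \<le> n"
  shows "moment \<beta> p = (\<Sum>k\<le>n. coeff p k * \<beta> k)"
proof -
  have "(\<Sum>k\<le>n. coeff p k * \<beta> k) = (\<Sum>k\<le>degree p. coeff p k * \<beta> k)"
    by (rule sum.mono_neutral_right) (use assms in \<open>auto simp: not_le coeff_eq_0\<close>)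
  then show ?thesis
    by (simp add: moment_def)
qed

lemma moment_add: "moment \<beta> (p + r) = moment \<beta> p + moment \<beta> r"
proof -
  let ?n = "max (degree p) (degree r)"
  have "degree (p + r) \<le> ?n"
    by (rule degree_add_le) auto
  then have "moment \<beta> (p + r) = (\<Sum>k\<le>?n. coeff (p + r) k * \<beta> k)"
    by (rule moment_upto)
  also have "\<dots> = (\<Sum>k\<le>?n. coeff p k * \<beta> k) + (\<Sum>k\<le>?n. coeff r k * \<beta> k)"
    by (simp add: distrib_right sum.distrib)
  also have "\<dots> = moment \<beta> p + moment \<beta> r"
    by (simp add: moment_upto[of p ?n] moment_upto[of r ?n])
  finally show ?thesis .
qed

lemma moment_smult: "moment \<beta> (smult c p) = c * moment \<beta> p"
proof -
  have "moment \<beta> (smult c p) = (\<Sum>k\<le>degree p. coeff (smult c p) k * \<beta> k)"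
    by (rule moment_upto) (rule degree_smult_le)
  then show ?thesis
    by (simp add: moment_def sum_distrib_left mult.assoc)
qed

lemma moment_0 [simp]: "moment \<beta> 0 = 0"
  by (simp add: moment_def)

lemma moment_diff: "moment \<beta> (p - r) = moment \<beta> p - moment \<beta> r"
  using moment_add[of \<beta> p "-r"] moment_smult[of \<beta> "-1" r] by simp

lemma moment_sum: "moment \<beta> (\<Sum>i\<in>A. f i) = (\<Sum>i\<in>A. moment \<beta> (f i))"
  by (induction A rule: infinite_finite_induct) (auto simp: moment_add)

lemma moment_monom: "moment \<beta> (monom c n) = c * \<beta> n"
proof -
  have "moment \<beta> (monom c n) = (\<Sum>k\<le>n. coeff (monom c n) k * \<beta> k)"
    by (rule moment_upto) (simp add: degree_monom_le)
  also have "\<dots> = (\<Sum>k\<le>n. if k = n then c * \<beta> k else 0)"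
    by (rule sum.cong) auto
  finally show ?thesis
    by simp
qed

lemma moment_1: "moment \<beta> 1 = \<beta> 0"
  using moment_monom[of \<beta> 1 0] by (simp add: monom_0 pCons_one)

lemma moment_linear_power:
  "moment \<beta> ([:1, a:] ^ n) = (\<Sum>k\<le>n. of_nat (n choose k) * a ^ k * \<beta> k)"
proof -
  have "degree ([:1, a:] ^ n) \<le> n"
    by (metis One_nat_def degree_pCons_eq_if degree_power_le gr_zeroI mult_1
        nle_le one_poly_eq_simps(2) order_less_imp_le power_one)
  then have "moment \<beta> ([:1, a:] ^ n) = (\<Sum>k\<le>n. coeff ([:1, a:] ^ n) k * \<beta> k)"
    by (rule moment_upto)
  also have "\<dots> = (\<Sum>k\<le>n. of_nat (n choose k) * a ^ k * \<beta> k)"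
    by (rule sum.cong) (simp_all add: coeff_linear_poly_power)
  finally show ?thesis .
qed

lemma pcompose_monom_eq_smult_power: "pcompose (monom c n) r = smult c (r ^ n)"
  by (induction n) (simp_all add: monom_0 monom_Suc pcompose_pCons mult.commute mult.left_commute)

lemma smult_sum_right: "smult c (\<Sum>i\<in>A. f i) = (\<Sum>i\<in>A. smult c (f i))"
  by (induction A rule: infinite_finite_induct) (auto simp: smult_add_right)

lemma pCons_0_sum: "pCons 0 (sum f A) = (\<Sum>i\<in>A. pCons 0 (f i))"
  by (induction A rule: infinite_finite_induct) (simp_all, metis add_pCons add_0)

lemma pCons_0_add: "pCons 0 (p + r) = pCons 0 p + pCons 0 r"
  by simp

lemma pCons_0_diff: "pCons 0 (p - r) = pCons 0 p - pCons 0 r"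
  by simp

lemma pCons_0_smult: "pCons 0 (smult c p) = smult c (pCons 0 p)"
  by simp

lemma moment_pCons_0_mult_sum:
  "moment \<beta> (pCons 0 (h * (\<Sum>k\<in>A. smult (c k) (p k))))
     = (\<Sum>k\<in>A. c k * moment \<beta> (pCons 0 (h * p k)))"
  by (simp only: sum_distrib_left mult_smult_right pCons_0_sum pCons_0_smult
      moment_sum moment_smult)


text \<open>
  At \<open>x = [a]\<^sub>q\<close> these are \<open>\<prod>\<^sub>i\<^sub>=\<^sub>1\<^sub>.\<^sub>.\<^sub>k [a + i]\<^sub>q\<close> and \<open>\<prod>\<^sub>i\<^sub>=\<^sub>1\<^sub>.\<^sub>.\<^sub>k [a - i]\<^sub>q\<close>; substituting
  \<open>1 + q x\<close> for \<open>x\<close> corresponds to \<open>a \<mapsto> a + 1\<close>.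
\<close>
fun qrising_poly :: "nat \<Rightarrow> ratfun poly" where
  "qrising_poly 0 = 1"
| "qrising_poly (Suc k) = qrising_poly k * [:qint (Suc k), q ^ Suc k:]"

fun qfalling_poly :: "nat \<Rightarrow> ratfun poly" where
  "qfalling_poly 0 = 1"
| "qfalling_poly (Suc k) = qfalling_poly k * [:qint_neg (Suc k), 1 / q ^ Suc k:]"

lemma pcompose_qint_linear: "pcompose [:qint i, q ^ i:] [:1, q:] = [:qint (Suc i), q ^ Suc i:]"
  by (simp add: pcompose_pCons qint_Suc algebra_simps)

lemma pcompose_qint_neg_linear:
  "pcompose [:qint_neg (Suc i), 1 / q ^ Suc i:] [:1, q:] = [:qint_neg i, 1 / q ^ i:]"
  unfolding qint_neg_def qint_def
  by (simp add: pcompose_pCons power_add divide_simps) (simp add: algebra_simps)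

lemma pcompose_pCons_0_qrising_poly:
  "pcompose (pCons 0 (qrising_poly k)) [:1, q:] = qrising_poly (Suc k)"
proof (induction k)
  case 0
  then show ?case
    by (simp add: pcompose_pCons pcompose_1)
next
  case (Suc k)
  have "pCons 0 (qrising_poly (Suc k)) = pCons 0 (qrising_poly k) * [:qint (Suc k), q ^ Suc k:]"
    by simp
  then have "pcompose (pCons 0 (qrising_poly (Suc k))) [:1, q:]
      = qrising_poly (Suc k) * [:qint (Suc (Suc k)), q ^ Suc (Suc k):]"
    by (simp only: pcompose_mult Suc pcompose_qint_linear)
  then show ?case
    by simp
qed

lemma pcompose_qfalling_poly_Suc:
  "pcompose (qfalling_poly (Suc j)) [:1, q:] = pCons 0 (qfalling_poly j)"
proof (induction j)
  case 0
  then show ?case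
    using pcompose_qint_neg_linear[of 0] by (simp add: qint_neg_def)
next
  case (Suc j)
  have "pcompose (qfalling_poly (Suc (Suc j))) [:1, q:]
      = pCons 0 (qfalling_poly j) * [:qint_neg (Suc j), 1 / q ^ Suc j:]"
    by (simp only: qfalling_poly.simps(2)[of "Suc j"] pcompose_mult Suc pcompose_qint_neg_linear)
  then show ?case
    by simp
qed

lemma coeff_0_qrising_poly: "coeff (qrising_poly k) 0 = qfact k"
  by (induction k) (auto simp: coeff_mult_0)

lemma coeff_0_qfalling_poly: "coeff (qfalling_poly k) 0 = qfact_neg k"
  by (induction k) (auto simp: coeff_mult_0)

lemma qrising_poly_Suc_split:
  "qrising_poly (Suc k)
     = smult (qint (Suc k)) (qrising_poly k) + smult (q ^ Suc k) (pCons 0 (qrising_poly k))"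
  by (simp add: mult.commute)

lemma pCons_0_qrising_poly:
  "pCons 0 (qrising_poly k)
     = smult (1 / q ^ (k + 1)) (qrising_poly (Suc k))
       - smult (qint (k + 1) / q ^ (k + 1)) (qrising_poly k)"
proof -
  have "smult (1 / q ^ (k + 1)) (qrising_poly (Suc k))
      = smult (qint (k + 1) / q ^ (k + 1)) (qrising_poly k) + pCons 0 (qrising_poly k)"
    by (subst qrising_poly_Suc_split) (simp add: smult_add_right del: smult_pCons)
  then show ?thesis
    by simp
qed

lemma qfalling_poly_neq_0: "qfalling_poly m \<noteq> 0"
  and degree_qfalling_poly: "degree (qfalling_poly m) = m"
proof (induction m)
  case 0
  { case 1 show ?case by simp }
  { case 2 show ?case by simp }
next
  case (Suc m)
  have h: "qfalling_poly (Suc m) = qfalling_poly m * [:qint_neg (Suc m), 1 / q ^ Suc m:]"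
    by simp
  { case 1 show ?case using Suc.IH(1) unfolding h by (simp del: mult_pCons_right mult_pCons_left) }
  { case 2 show ?case using Suc.IH unfolding h
      by (simp add: degree_mult_eq del: mult_pCons_right mult_pCons_left) }
qed

lemma qfalling_poly_decomp:
  assumes "\<forall>i\<ge>Suc m. coeff g i = 0"
  obtains s r where "g = smult s (qfalling_poly m) + r" and "\<forall>i\<ge>m. coeff r i = 0"
proof -
  let ?F = "qfalling_poly m"
  have lc: "coeff ?F m \<noteq> 0"
    by (metis degree_qfalling_poly leading_coeff_0_iff qfalling_poly_neq_0)
  define s where "s = coeff g m / coeff ?F m"
  have "coeff (g - smult s ?F) i = 0" if "m \<le> i" for i
  proof (cases "i = m")
    case True
    then show ?thesis
      using lc by (simp add: s_def)
  next
    case False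
    with that have "coeff ?F i = 0" and "coeff g i = 0"
      using assms by (simp_all add: coeff_eq_0 degree_qfalling_poly)
    then show ?thesis
      by simp
  qed
  then show ?thesis
    using that[of s "g - smult s ?F"] by simp
qed


locale qBC =
  fixes \<beta> :: "nat \<Rightarrow> ratfun"
  assumes qBC: "is_qBC \<beta>"
begin

lemma moment_shift_monom:
  "q * moment \<beta> (pcompose (monom 1 n) [:1, q:]) - moment \<beta> (monom 1 n)
     = (q - 1) * coeff (monom 1 n) 0 + coeff (monom 1 n) 1"
proof -
  have "q * (\<Sum>k=0..n. of_nat (n choose k) * q ^ k * \<beta> k) - \<beta> n
      = (if n = 0 then q - 1 else if n = 1 then 1 else 0)"
    using qBC unfolding is_qBC_def by blast
  moreover have "{0..n} = {..n}"
    by auto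
  ultimately show ?thesis
    by (auto simp: pcompose_monom_eq_smult_power moment_linear_power moment_monom)
qed

theorem moment_shift:
  "q * moment \<beta> (pcompose p [:1, q:]) - moment \<beta> p = (q - 1) * coeff p 0 + coeff p 1"
proof -
  let ?m = "\<lambda>i. smult (coeff p i) (monom 1 i)"
  have p: "p = (\<Sum>i\<le>degree p. ?m i)"
    by (simp add: smult_monom poly_as_sum_of_monoms)
  have "q * moment \<beta> (pcompose p [:1, q:]) - moment \<beta> p
      = (\<Sum>i\<le>degree p. coeff p i *
           (q * moment \<beta> (pcompose (monom 1 i) [:1, q:]) - moment \<beta> (monom 1 i)))"
    by (subst (1 2) p) (simp add: pcompose_sum pcompose_smult moment_sum moment_smult
        sum_distrib_left sum_subtractf algebra_simps)
  also have "\<dots> = (\<Sum>i\<le>degree p. coeff (?m i) 0 * (q - 1) + coeff (?m i) 1)"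
    by (rule sum.cong) (auto simp: moment_shift_monom algebra_simps)
  also have "\<dots> = coeff (\<Sum>i\<le>degree p. ?m i) 0 * (q - 1) + coeff (\<Sum>i\<le>degree p. ?m i) 1"
    by (simp add: coeff_sum sum.distrib sum_distrib_right)
  finally show ?thesis
    using p[symmetric] by (simp add: algebra_simps)
qed

lemma beta_0: "\<beta> 0 = 1"
proof -
  have "q * (\<Sum>k=0..0. of_nat (0 choose k) * q ^ k * \<beta> k) - \<beta> 0 = q - 1"
    using qBC unfolding is_qBC_def by (metis (no_types, lifting))
  then have "(q - 1) * \<beta> 0 = (q - 1) * 1"
    by (simp add: algebra_simps)
  then show ?thesis
    by simp
qed

lemma beta_1_neq_0: "\<beta> 1 \<noteq> 0"
proof
  assume "\<beta> 1 = 0"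
  moreover have "q * (\<Sum>k=0..1. of_nat (1 choose k) * q ^ k * \<beta> k) - \<beta> 1 = 1"
    using qBC unfolding is_qBC_def by (metis (no_types, lifting) one_neq_zero)
  ultimately show False
    using beta_0 by simp
qed

lemma moment_shift_qrising_poly:
  "q * moment \<beta> (qrising_poly (Suc k)) - moment \<beta> (pCons 0 (qrising_poly k)) = qfact k"
  using moment_shift[of "pCons 0 (qrising_poly k)"]
  by (simp add: pcompose_pCons_0_qrising_poly coeff_0_qrising_poly)

lemma moment_qrising_poly: "moment \<beta> (qrising_poly k) = qfact k / qint (Suc k)"
proof (induction k)
  case 0
  then show ?case
    by (simp add: moment_1 beta_0)
next
  case (Suc k)
  define X where "X = moment \<beta> (qrising_poly (Suc k))"
  have "X = qint (Suc k) * moment \<beta> (qrising_poly k)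
            + q ^ Suc k * moment \<beta> (pCons 0 (qrising_poly k))"
    unfolding X_def
    by (subst qrising_poly_Suc_split) (simp add: moment_add moment_smult del: smult_pCons)
  also have "\<dots> = qfact k + q ^ Suc k * (q * X - qfact k)"
    using Suc moment_shift_qrising_poly[of k] by (simp add: X_def)
  finally have "X * (1 - q ^ Suc (Suc k)) = qfact k * (1 - q ^ Suc k)"
    by (simp add: algebra_simps)
  moreover have "1 - q ^ Suc (Suc k) \<noteq> 0" and "q ^ Suc (Suc k) - 1 \<noteq> 0"
    using qvar_power_neq_1[of "Suc (Suc k)"] by auto
  ultimately have "X = qfact k * (q ^ Suc k - 1) / (q ^ Suc (Suc k) - 1)"
    by (simp add: field_simps)
  then show ?case
    by (simp add: X_def qint_def)
qed

definition mixed_moment :: "nat \<Rightarrow> nat \<Rightarrow> ratfun" where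
  "mixed_moment j k = moment \<beta> (pCons 0 (qfalling_poly j * qrising_poly k))"

lemma mixed_moment_shift:
  "q * mixed_moment j (Suc k) - mixed_moment (Suc j) k = qfact_neg (Suc j) * qfact k"
proof -
  have "pCons 0 (qfalling_poly (Suc j) * qrising_poly k)
      = qfalling_poly (Suc j) * pCons 0 (qrising_poly k)"
    by simp
  then have "pcompose (pCons 0 (qfalling_poly (Suc j) * qrising_poly k)) [:1, q:]
      = pCons 0 (qfalling_poly j * qrising_poly (Suc k))"
    by (simp only: pcompose_mult pcompose_pCons_0_qrising_poly pcompose_qfalling_poly_Suc) simp
  then show ?thesis
    using moment_shift[of "pCons 0 (qfalling_poly (Suc j) * qrising_poly k)"]
    by (simp add: mixed_moment_def coeff_mult_0 coeff_0_qrising_poly coeff_0_qfalling_poly)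
qed

lemma mixed_moment_0: "mixed_moment 0 k = - qfact k / qint (k + 2)"
proof -
  have "mixed_moment 0 k = q * moment \<beta> (qrising_poly (Suc k)) - qfact k"
    using moment_shift_qrising_poly[of k] by (simp add: mixed_moment_def)
  also have "\<dots> = q * (qfact k * qint (Suc k) / qint (Suc (Suc k))) - qfact k"
    by (simp only: moment_qrising_poly qfact.simps)
  also have "\<dots> = - qfact k / qint (k + 2)"
    using qvar_power_neq_1[of "k + 2"] qvar_power_neq_1[of "Suc k"]
    unfolding qint_def
    by (simp add: divide_simps power_add del: qvar_power_neq_1) (simp add: algebra_simps)
  finally show ?thesis .
qed

theorem mixed_moment_eq:
  "mixed_moment j k = - qfact_neg j * qint (Suc j) * qfact k / qint (j + k + 2)"
proof (induction j arbitrary: k)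
  case 0
  then show ?case
    by (simp add: mixed_moment_0)
next
  case (Suc j)
  have "mixed_moment (Suc j) k = q * mixed_moment j (Suc k) - qfact_neg (Suc j) * qfact k"
    using mixed_moment_shift[of j k] by simp
  also have "\<dots> = q * (- qfact_neg j * qint (Suc j) * qfact (Suc k) / qint (j + Suc k + 2))
      - qfact_neg j * qint_neg (Suc j) * qfact k"
    using Suc[of "Suc k"] by simp
  also have "\<dots> = - qfact_neg (Suc j) * qint (Suc (Suc j)) * qfact k / qint (Suc j + k + 2)"
    using qvar_power_neq_1[of "Suc (Suc (Suc (j + k)))"] qvar_power_neq_1[of "Suc j"]
      qvar_power_neq_1[of "Suc (Suc j)"] qvar_power_neq_1[of "Suc k"]
    unfolding qfact_neg.simps qfact.simps qint_neg_def qint_def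
    by (simp add: divide_simps power_add del: qvar_power_neq_1) (simp add: algebra_simps)
  finally show ?case .
qed

end

subsection \<open>The polynomials \<open>P\<^sub>m\<close> and \<open>Q\<^sub>m\<close>\<close>

lemma cfc_odd:
  "cfc (2*m+1) = q^(m+1) * qint (m+1) ^ 2 * qint (m+2) / (qint (2*m+2) * qint (2*m+3))"
proof -
  have "(2*m+1+1) div 2 = m + 1"
    by simp
  then show ?thesis
    by (simp add: cfc_def Let_def algebra_simps) (simp add: numeral_eq_Suc)
qed

lemma cfc_odd_Suc:
  "cfc (2*m+3) = q^(m+2) * qint (m+2) ^ 2 * qint (m+3) / (qint (2*m+4) * qint (2*m+5))"
  using cfc_odd[of "m+1"] by (simp add: numeral_eq_Suc)

lemma cfc_even:
  "cfc (2*m+2) = - (qint (m+1) * qint (m+2) ^ 2 / (qint (2*m+3) * qint (2*m+4)))"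
proof -
  have "(2*m+2) div 2 = m + 1"
    by simp
  then show ?thesis
    by (simp add: cfc_def Let_def algebra_simps) (simp add: numeral_eq_Suc)
qed

lemma cfc_neq_0: "k > 0 \<Longrightarrow> cfc k \<noteq> 0"
  by (auto simp: cfc_def Let_def)

text \<open>
  The coefficient ratios vanish at \<open>i = m\<close> (as \<open>qint 0 = 0\<close>), so \<open>P\<^sub>m\<close> and \<open>Q\<^sub>m\<close> below do
  not change when the range of summation is extended beyond \<open>m\<close>.
\<close>
fun Pnorm :: "nat \<Rightarrow> ratfun" where
  "Pnorm 0 = 1"
| "Pnorm (Suc m) = Pnorm m * (qint (2*m+3) * qint (2*m+4)) / (q^(m+2) * qint (m+2) * qint (m+1)^2)"

definition Qnorm :: "nat \<Rightarrow> ratfun" where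
  "Qnorm m = - (Pnorm m * qint (2*m+3) / (q^(m+1) * qint (m+1)))"

definition Pcoeff_ratio :: "nat \<Rightarrow> nat \<Rightarrow> ratfun" where
  "Pcoeff_ratio m i = - (q^(i+1) * qint (m-i) * qint (m+i+2) / (q^m * qint (i+1)^2 * qint (i+2)))"

definition Qcoeff_ratio :: "nat \<Rightarrow> nat \<Rightarrow> ratfun" where
  "Qcoeff_ratio m i = - (q^(i+1) * qint (m-i) * qint (m+i+3) / (q^m * qint (i+1) * qint (i+2)^2))"

fun Pcoeff :: "nat \<Rightarrow> nat \<Rightarrow> ratfun" where
  "Pcoeff m 0 = Pnorm m"
| "Pcoeff m (Suc k) = Pcoeff m k * Pcoeff_ratio m k"

fun Qcoeff :: "nat \<Rightarrow> nat \<Rightarrow> ratfun" where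
  "Qcoeff m 0 = Qnorm m"
| "Qcoeff m (Suc k) = Qcoeff m k * Qcoeff_ratio m k"

definition Ppoly :: "nat \<Rightarrow> ratfun poly" where
  "Ppoly m = (\<Sum>k\<le>m. smult (Pcoeff m k) (qrising_poly k))"

definition Qpoly :: "nat \<Rightarrow> ratfun poly" where
  "Qpoly m = (\<Sum>k\<le>m. smult (Qcoeff m k) (qrising_poly k))"

lemma Pnorm_neq_0: "Pnorm m \<noteq> 0"
  by (induction m) auto

lemma Pcoeff_eq_0: "m < k \<Longrightarrow> Pcoeff m k = 0"
  by (induction k) (auto simp: Pcoeff_ratio_def less_Suc_eq)

lemma Qcoeff_eq_0: "m < k \<Longrightarrow> Qcoeff m k = 0"
  by (induction k) (auto simp: Qcoeff_ratio_def less_Suc_eq)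

lemma Ppoly_extend: "m \<le> n \<Longrightarrow> Ppoly m = (\<Sum>k\<le>n. smult (Pcoeff m k) (qrising_poly k))"
  unfolding Ppoly_def by (rule sum.mono_neutral_left) (auto simp: Pcoeff_eq_0)

lemma Qpoly_extend: "m \<le> n \<Longrightarrow> Qpoly m = (\<Sum>k\<le>n. smult (Qcoeff m k) (qrising_poly k))"
  unfolding Qpoly_def by (rule sum.mono_neutral_left) (auto simp: Qcoeff_eq_0)

definition QP_ratio :: "nat \<Rightarrow> nat \<Rightarrow> ratfun" where
  "QP_ratio m k = - (qint (2*m+3) * qint (m+k+2) / (q^(m+1) * qint (m+1) * qint (m+2) * qint (k+1)))"

definition Pcoeff_shift_ratio :: "nat \<Rightarrow> nat \<Rightarrow> ratfun" where
  "Pcoeff_shift_ratio m k =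
     q^(m+k+2) * qint (m+1) * qint (m+2)^2 * qint (m+1-k) / (qint (2*m+3) * qint (2*m+4) * qint (m+k+2))"

lemma Qcoeff_eq_Pcoeff_mult: "Qcoeff m k = Pcoeff m k * QP_ratio m k"
proof (induction k)
  case 0
  then show ?case
    using qvar_power_neq_1[of "m+1"] qvar_power_neq_1[of "m+2"] qvar_power_neq_1[of "2*m+3"]
      Pnorm_neq_0[of m]
    unfolding Qcoeff.simps Pcoeff.simps Qnorm_def QP_ratio_def qint_def
    by (simp add: divide_simps qpower_expand del: qvar_power_neq_1)
next
  case (Suc k)
  have "QP_ratio m k * Qcoeff_ratio m k = Pcoeff_ratio m k * QP_ratio m (Suc k)"
    using qvar_power_neq_1[of "m+1"] qvar_power_neq_1[of "m+2"] qvar_power_neq_1[of "2*m+3"]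
      qvar_power_neq_1[of "k+1"] qvar_power_neq_1[of "k+2"] qvar_power_neq_1[of "m+k+2"]
      qvar_power_neq_1[of "m+k+3"] qvar_power_neq_1[of "m+Suc k+2"] qvar_power_neq_1[of "Suc k+1"]
    unfolding Qcoeff_ratio_def Pcoeff_ratio_def QP_ratio_def qint_def
    by (simp add: divide_simps qpower_expand del: qvar_power_neq_1, (simp add: algebra_simps)?)
  then show ?case
    using Suc by (simp add: mult.assoc)
qed

lemma Pcoeff_eq_Pcoeff_Suc_mult: "Pcoeff m k = Pcoeff (Suc m) k * Pcoeff_shift_ratio m k"
proof (induction k)
  case 0
  then show ?case
    using Pnorm_neq_0[of m]
    unfolding Pcoeff.simps Pnorm.simps Pcoeff_shift_ratio_def
    by (simp add: divide_simps qpower_expand, (simp add: mult_ac)?)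
next
  case (Suc k)
  have "Pcoeff_shift_ratio m k * Pcoeff_ratio m k = Pcoeff_ratio (Suc m) k * Pcoeff_shift_ratio m (Suc k)"
    unfolding Pcoeff_ratio_def Pcoeff_shift_ratio_def
    by (simp add: divide_simps qpower_expand, (simp add: mult_ac)?)
  then show ?case
    using Suc by (simp add: mult.assoc)
qed

lemma Pcoeff_shift_ratio_mult_QP_ratio:
  "Pcoeff_shift_ratio m k * QP_ratio m k
     = - (q^(k+1) * qint (m+2) * qint (m+1-k) / (qint (2*m+4) * qint (k+1)))"
  unfolding QP_ratio_def Pcoeff_shift_ratio_def
  by (simp add: divide_simps qpower_expand, (simp add: mult_ac)?)

lemma cfc_mult_QP_ratio:
  "cfc (2*m+3) * QP_ratio (Suc m) k = - (qint (m+2) * qint (m+k+3) / (qint (2*m+4) * qint (k+1)))"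
  unfolding cfc_odd_Suc QP_ratio_def
  by (simp add: divide_simps qpower_expand numeral_eq_Suc, (simp add: mult_ac)?)

lemma Qcoeff_recurrence_ratio:
  assumes "k \<le> m + 1"
  shows "Pcoeff_shift_ratio m k * QP_ratio m k = 1 + cfc (2*m+3) * QP_ratio (Suc m) k"
proof (cases "k = m + 1")
  case True
  then have "m + k + 3 = 2*m+4" "k+1 = m+2" "m + 1 - k = 0"
    by simp_all
  then show ?thesis
    unfolding Pcoeff_shift_ratio_mult_QP_ratio cfc_mult_QP_ratio by (simp only:) simp
next
  case False
  with assms obtain e where e: "m = k + e"
    using le_Suc_ex by fastforce
  have "k + e + 1 - k = e + 1"
    by simp
  then show ?thesis
    unfolding Pcoeff_shift_ratio_mult_QP_ratio cfc_mult_QP_ratio e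
    apply (simp add: divide_simps del: qvar_power_neq_1)
    unfolding qint_def divide_inverse by (simp only: qpower_normalize) algebra
qed

lemma Qcoeff_recurrence: "Qcoeff m k = Pcoeff (Suc m) k + cfc (2*m+3) * Qcoeff (Suc m) k"
proof (cases "k \<le> m + 1")
  case True
  have "Qcoeff m k = Pcoeff (Suc m) k * (Pcoeff_shift_ratio m k * QP_ratio m k)"
    by (simp add: Qcoeff_eq_Pcoeff_mult Pcoeff_eq_Pcoeff_Suc_mult[of m k] mult.assoc)
  also have "\<dots> = Pcoeff (Suc m) k * (1 + cfc (2*m+3) * QP_ratio (Suc m) k)"
    using Qcoeff_recurrence_ratio[OF True] by simp
  also have "\<dots> = Pcoeff (Suc m) k + cfc (2*m+3) * Qcoeff (Suc m) k"
    by (simp add: Qcoeff_eq_Pcoeff_mult algebra_simps)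
  finally show ?thesis .
next
  case False
  then show ?thesis
    by (simp add: Pcoeff_eq_0 Qcoeff_eq_0)
qed

lemma Qpoly_recurrence: "Qpoly m = Ppoly (Suc m) + smult (cfc (2*m+3)) (Qpoly (Suc m))"
proof -
  have "Ppoly (Suc m) + smult (cfc (2*m+3)) (Qpoly (Suc m))
      = (\<Sum>k\<le>Suc m. smult (Pcoeff (Suc m) k + cfc (2*m+3) * Qcoeff (Suc m) k) (qrising_poly k))"
    unfolding Ppoly_def Qpoly_def smult_sum_right
    by (simp only: smult_smult smult_add_left sum.distrib)
  also have "\<dots> = Qpoly m"
    by (simp only: Qcoeff_recurrence[symmetric] Qpoly_extend[of m "Suc m"] le_SucI order_refl)
  finally show ?thesis
    by simp
qed

text \<open>The coefficients of \<open>x Q\<^sub>m\<close> in the rising basis.\<close>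
fun xQcoeff :: "nat \<Rightarrow> nat \<Rightarrow> ratfun" where
  "xQcoeff m 0 = 0"
| "xQcoeff m (Suc k) = Qcoeff m k / q ^ Suc k"

lemma pCons_0_Qpoly:
  "pCons 0 (Qpoly m)
     = (\<Sum>k\<le>Suc m. smult (xQcoeff m k - Qcoeff m k * qint (k+1) / q^(k+1)) (qrising_poly k))"
proof -
  have "pCons 0 (Qpoly m) = (\<Sum>k\<le>m. smult (Qcoeff m k) (pCons 0 (qrising_poly k)))"
    unfolding Qpoly_def pCons_0_sum pCons_0_smult ..
  also have "\<dots> = (\<Sum>k\<le>m. smult (xQcoeff m (Suc k)) (qrising_poly (Suc k)))
      - (\<Sum>k\<le>m. smult (Qcoeff m k * qint (k+1) / q^(k+1)) (qrising_poly k))"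
    unfolding sum_subtractf[symmetric]
    by (rule sum.cong[OF refl]) (simp add: pCons_0_qrising_poly smult_diff_right del: smult_pCons)
  also have "(\<Sum>k\<le>m. smult (xQcoeff m (Suc k)) (qrising_poly (Suc k)))
      = (\<Sum>k\<le>Suc m. smult (xQcoeff m k) (qrising_poly k))"
    by (subst sum.atMost_Suc_shift) simp
  also have "(\<Sum>k\<le>m. smult (Qcoeff m k * qint (k+1) / q^(k+1)) (qrising_poly k))
      = (\<Sum>k\<le>Suc m. smult (Qcoeff m k * qint (k+1) / q^(k+1)) (qrising_poly k))"
    by (subst sum.atMost_Suc)
      (simp only: Qcoeff_eq_0[of m "Suc m", OF lessI] mult_zero_left div_0 smult_0_left add_0_right)
  finally show ?thesis
    by (simp only: sum_subtractf smult_diff_left)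
qed

lemma Pcoeff_recurrence_0_ratio:
  "Pcoeff_shift_ratio m 0 = - (Pcoeff_shift_ratio m 0 * QP_ratio m 0) / q + cfc (2*m+2)"
  unfolding Pcoeff_shift_ratio_mult_QP_ratio unfolding cfc_even Pcoeff_shift_ratio_def
  apply (simp add: divide_simps del: qvar_power_neq_1)
  unfolding qint_def divide_inverse by (simp only: qpower_normalize) algebra

lemma Pcoeff_recurrence_Suc_ratio:
  assumes "k \<le> m"
  shows "Pcoeff_ratio (Suc m) k * Pcoeff_shift_ratio m (Suc k)
    = Pcoeff_shift_ratio m k * QP_ratio m k / q^(Suc k)
      - Pcoeff_ratio (Suc m) k * Pcoeff_shift_ratio m (Suc k) * QP_ratio m (Suc k)
          * qint (k + 2) / q^(k + 2)
      + cfc (2*m+2) * Pcoeff_ratio (Suc m) k"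
proof -
  obtain e where e: "m = k + e"
    using assms le_Suc_ex by blast
  have "k + e + 1 - k = e + 1" "Suc (k + e) - k = e + 1" "k + e - k = e" "k + e + 1 - Suc k = e"
    by simp_all
  then show ?thesis
    unfolding Pcoeff_shift_ratio_mult_QP_ratio cfc_even
    unfolding Pcoeff_shift_ratio_def QP_ratio_def Pcoeff_ratio_def e
    apply (simp add: divide_simps del: qvar_power_neq_1)
    unfolding qint_def divide_inverse by (simp only: qpower_normalize) algebra
qed

lemma Pcoeff_recurrence:
  "Pcoeff m k = xQcoeff m k - Qcoeff m k * qint (k+1) / q^(k+1) + cfc (2*m+2) * Pcoeff (Suc m) k"
proof (cases k)
  case 0
  define A where "A = Pcoeff (Suc m) 0"
  have Q: "Qcoeff m 0 = A * Pcoeff_shift_ratio m 0 * QP_ratio m 0"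
    unfolding Qcoeff_eq_Pcoeff_mult[of m 0] Pcoeff_eq_Pcoeff_Suc_mult[of m 0] A_def ..
  have "Pcoeff m 0 = A * Pcoeff_shift_ratio m 0"
    unfolding Pcoeff_eq_Pcoeff_Suc_mult[of m 0] A_def ..
  also have "\<dots> = A * (- (Pcoeff_shift_ratio m 0 * QP_ratio m 0) / q + cfc (2*m+2))"
    using Pcoeff_recurrence_0_ratio by metis
  also have "\<dots> = xQcoeff m 0 - (A * Pcoeff_shift_ratio m 0 * QP_ratio m 0) * qint (0+1) / q^(0+1)
      + cfc (2*m+2) * A"
    by (simp add: algebra_simps)
  also have "\<dots> = xQcoeff m 0 - Qcoeff m 0 * qint (0+1) / q^(0+1) + cfc (2*m+2) * Pcoeff (Suc m) 0"
    unfolding Q A_def ..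
  finally show ?thesis
    using 0 by simp
next
  case (Suc k')
  show ?thesis
  proof (cases "k' \<le> m")
    case True
    define A where "A = Pcoeff (Suc m) k'"
    have P': "Pcoeff (Suc m) (Suc k') = A * Pcoeff_ratio (Suc m) k'"
      by (simp add: A_def)
    have P: "Pcoeff m (Suc k') = A * Pcoeff_ratio (Suc m) k' * Pcoeff_shift_ratio m (Suc k')"
      using Pcoeff_eq_Pcoeff_Suc_mult[of m "Suc k'"] P' by simp
    have Q: "Qcoeff m (Suc k')
        = A * Pcoeff_ratio (Suc m) k' * Pcoeff_shift_ratio m (Suc k') * QP_ratio m (Suc k')"
      using Qcoeff_eq_Pcoeff_mult[of m "Suc k'"] P by simp
    have Q': "Qcoeff m k' = A * Pcoeff_shift_ratio m k' * QP_ratio m k'"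
      using Qcoeff_eq_Pcoeff_mult[of m k'] Pcoeff_eq_Pcoeff_Suc_mult[of m k'] by (simp add: A_def)
    have "Pcoeff m (Suc k') = A * (Pcoeff_ratio (Suc m) k' * Pcoeff_shift_ratio m (Suc k'))"
      using P by (simp add: mult.assoc)
    also have "\<dots> = A * (Pcoeff_shift_ratio m k' * QP_ratio m k' / q^(Suc k')
        - Pcoeff_ratio (Suc m) k' * Pcoeff_shift_ratio m (Suc k') * QP_ratio m (Suc k')
            * qint (k' + 2) / q^(k' + 2)
        + cfc (2*m+2) * Pcoeff_ratio (Suc m) k')"
      using Pcoeff_recurrence_Suc_ratio[OF True] by metis
    also have "\<dots> = xQcoeff m (Suc k') - Qcoeff m (Suc k') * qint (k' + 2) / q^(k' + 2)
        + cfc (2*m+2) * Pcoeff (Suc m) (Suc k')"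
      unfolding xQcoeff.simps P' Q Q' by (simp add: algebra_simps)
    finally show ?thesis
      using Suc by simp
  next
    case False
    then show ?thesis
      using Suc by (simp add: Pcoeff_eq_0 Qcoeff_eq_0 del: Pcoeff.simps Qcoeff.simps)
  qed
qed

lemma Ppoly_recurrence: "Ppoly m = pCons 0 (Qpoly m) + smult (cfc (2*m+2)) (Ppoly (Suc m))"
proof -
  have "pCons 0 (Qpoly m) + smult (cfc (2*m+2)) (Ppoly (Suc m))
      = (\<Sum>k\<le>Suc m. smult (xQcoeff m k - Qcoeff m k * qint (k+1) / q^(k+1)
                          + cfc (2*m+2) * Pcoeff (Suc m) k) (qrising_poly k))"
    unfolding pCons_0_Qpoly Ppoly_def smult_sum_right
    by (simp only: smult_smult smult_add_left sum.distrib)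
  also have "\<dots> = Ppoly m"
    by (simp only: Pcoeff_recurrence[symmetric] Ppoly_extend[of m "Suc m"] le_SucI order_refl)
  finally show ?thesis
    by simp
qed


subsection \<open>Two terminating summations\<close>

lemma sum_eq_by_certificate:
  fixes T r R :: "nat \<Rightarrow> 'a::comm_ring_1"
  assumes "R 0 = 1"
    and "\<And>k. k < K \<Longrightarrow> T (Suc k) = T k * r k"
    and "\<And>k. k < K \<Longrightarrow> R k + r k = r k * R (Suc k)"
  shows "(\<Sum>k\<le>K. T k) = T K * R K"
  using assms(2,3)
proof (induction K)
  case 0
  then show ?case
    using assms(1) by simp
next
  case (Suc K)
  have "(\<Sum>k\<le>K. T k) = T K * R K"
    using Suc by simp
  then have "(\<Sum>k\<le>Suc K. T k) = T K * (R K + r K)"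
    using Suc.prems(1)[of K] by (simp add: algebra_simps)
  also have "\<dots> = T K * r K * R (Suc K)"
    using Suc.prems(2)[of K] by (simp add: mult.assoc)
  also have "\<dots> = T (Suc K) * R (Suc K)"
    using Suc.prems(1)[of K] by simp
  finally show ?case .
qed

definition Psum_term :: "nat \<Rightarrow> nat \<Rightarrow> ratfun" where
  "Psum_term m k = Pcoeff (Suc m) k * qfact k / qint (m+k+2)"

definition Qsum_term :: "nat \<Rightarrow> nat \<Rightarrow> ratfun" where
  "Qsum_term m k = Qcoeff (Suc m) k * qfact (Suc k) / (qint (m+k+2) * qint (m+k+3))"

definition Psum_term_ratio :: "nat \<Rightarrow> nat \<Rightarrow> ratfun" where
  "Psum_term_ratio m k = Pcoeff_ratio (Suc m) k * qint (k+1) * qint (m+k+2) / qint (m+k+3)"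

definition Qsum_term_ratio :: "nat \<Rightarrow> nat \<Rightarrow> ratfun" where
  "Qsum_term_ratio m k = Qcoeff_ratio (Suc m) k * qint (k+2) * qint (m+k+2) / qint (m+k+4)"

definition partial_sum_ratio :: "nat \<Rightarrow> nat \<Rightarrow> ratfun" where
  "partial_sum_ratio m k = qint (m+1-k) * qint (m+k+2) / (qint (m+1) * qint (m+2))"

lemma partial_sum_ratio_0: "partial_sum_ratio m 0 = 1"
  by (simp add: partial_sum_ratio_def)

lemma Psum_term_Suc: "Psum_term m (Suc k) = Psum_term m k * Psum_term_ratio m k"
  unfolding Psum_term_def Psum_term_ratio_def by (simp add: divide_simps numeral_eq_Suc, (simp add: mult_ac)?)

lemma Qsum_term_Suc: "Qsum_term m (Suc k) = Qsum_term m k * Qsum_term_ratio m k"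
  unfolding Qsum_term_def Qsum_term_ratio_def by (simp add: divide_simps numeral_eq_Suc, (simp add: mult_ac)?)

lemma Psum_certificate:
  assumes "k \<le> m"
  shows "partial_sum_ratio m k + Psum_term_ratio m k
    = Psum_term_ratio m k * partial_sum_ratio m (Suc k)"
proof -
  obtain e where e: "m = k + e"
    using assms le_Suc_ex by blast
  have "k + e + 1 - k = e + 1" "Suc (k + e) - k = e + 1" "k + e + 1 - Suc k = e"
    by simp_all
  then show ?thesis
    unfolding Psum_term_ratio_def partial_sum_ratio_def Pcoeff_ratio_def e
    apply (simp add: divide_simps del: qvar_power_neq_1)
    unfolding qint_def divide_inverse by (simp only: qpower_normalize) algebra
qed

lemma Qsum_certificate:
  assumes "k \<le> m"
  shows "partial_sum_ratio m k + Qsum_term_ratio m k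
    = Qsum_term_ratio m k * partial_sum_ratio m (Suc k)"
proof -
  obtain e where e: "m = k + e"
    using assms le_Suc_ex by blast
  have "k + e + 1 - k = e + 1" "Suc (k + e) - k = e + 1" "k + e + 1 - Suc k = e"
    by simp_all
  then show ?thesis
    unfolding Qsum_term_ratio_def partial_sum_ratio_def Qcoeff_ratio_def e
    apply (simp add: divide_simps del: qvar_power_neq_1)
    unfolding qint_def divide_inverse by (simp only: qpower_normalize) algebra
qed

lemma Psum_term_sum: "(\<Sum>k\<le>m+1. Psum_term m k) = 0"
proof -
  have "(\<Sum>k\<le>m+1. Psum_term m k) = Psum_term m (m+1) * partial_sum_ratio m (m+1)"
    by (rule sum_eq_by_certificate[where r = "Psum_term_ratio m"])
      (simp_all add: partial_sum_ratio_0 Psum_term_Suc Psum_certificate)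
  then show ?thesis
    by (simp add: partial_sum_ratio_def)
qed

lemma Qsum_term_sum: "(\<Sum>k\<le>m+1. Qsum_term m k) = 0"
proof -
  have "(\<Sum>k\<le>m+1. Qsum_term m k) = Qsum_term m (m+1) * partial_sum_ratio m (m+1)"
    by (rule sum_eq_by_certificate[where r = "Qsum_term_ratio m"])
      (simp_all add: partial_sum_ratio_0 Qsum_term_Suc Qsum_certificate)
  then show ?thesis
    by (simp add: partial_sum_ratio_def)
qed

subsection \<open>Orthogonality\<close>

context qBC
begin

lemma moment_qfalling_poly_Ppoly: "moment \<beta> (pCons 0 (qfalling_poly m * Ppoly (Suc m))) = 0"
proof -
  have "moment \<beta> (pCons 0 (qfalling_poly m * Ppoly (Suc m)))
      = (\<Sum>k\<le>Suc m. Pcoeff (Suc m) k * mixed_moment m k)"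
    unfolding Ppoly_def moment_pCons_0_mult_sum mixed_moment_def ..
  also have "\<dots> = (\<Sum>k\<le>m+1. (- qfact_neg m * qint (Suc m)) * Psum_term m k)"
    by (rule sum.cong) (simp_all add: mixed_moment_eq Psum_term_def)
  also have "\<dots> = 0"
    by (simp only: sum_distrib_left[symmetric] Psum_term_sum mult_zero_right)
  finally show ?thesis .
qed

lemma moment_qfalling_poly_xQpoly:
  "moment \<beta> (pCons 0 (qfalling_poly m * pCons 0 (Qpoly (Suc m)))) = 0"
proof -
  let ?a = "\<lambda>k. Qcoeff (Suc m) k / q^(k+1)"
  let ?b = "\<lambda>k. Qcoeff (Suc m) k * qint (k+1) / q^(k+1)"
  have "pCons 0 (Qpoly (Suc m)) = (\<Sum>k\<le>Suc m. smult (Qcoeff (Suc m) k) (pCons 0 (qrising_poly k)))"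
    unfolding Qpoly_def pCons_0_sum pCons_0_smult ..
  also have "\<dots> = (\<Sum>k\<le>Suc m. smult (?a k) (qrising_poly (Suc k))
      + smult (- ?b k) (qrising_poly k))"
    by (rule sum.cong[OF refl])
      (simp only: pCons_0_qrising_poly diff_conv_add_uminus smult_add_right smult_minus_right
        smult_minus_left smult_smult times_divide_eq_right mult_1_right)
  finally have xQ: "pCons 0 (Qpoly (Suc m))
      = (\<Sum>k\<le>Suc m. smult (?a k) (qrising_poly (Suc k)))
        + (\<Sum>k\<le>Suc m. smult (- ?b k) (qrising_poly k))"
    by (simp only: sum.distrib)
  have "moment \<beta> (pCons 0 (qfalling_poly m * pCons 0 (Qpoly (Suc m))))
      = (\<Sum>k\<le>Suc m. ?a k * mixed_moment m (Suc k))
        + (\<Sum>k\<le>Suc m. - ?b k * mixed_moment m k)"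
    unfolding xQ distrib_left pCons_0_add moment_add moment_pCons_0_mult_sum mixed_moment_def ..
  also have "\<dots> = (\<Sum>k\<le>Suc m. ?a k * mixed_moment m (Suc k) - ?b k * mixed_moment m k)"
    by (simp add: sum.distrib[symmetric])
  also have "\<dots> = (\<Sum>k\<le>m+1. (qfact_neg m * qint (Suc m) * q^(m+1)) * Qsum_term m k)"
  proof (rule sum.cong)
    fix k
    have "qint (m + Suc k + 2) = qint (m+k+2) + q^(m+k+2)" "qint (m + k + 3) = qint (m+k+2) + q^(m+k+2)"
      using qint_Suc[of "m+k+2"] by (simp_all add: numeral_eq_Suc)
    moreover have "qint (m+k+2) + q^(m+k+2) \<noteq> 0"
      by (metis qint_Suc qint_Suc_neq_0)
    ultimately show "?a k * mixed_moment m (Suc k) - ?b k * mixed_moment m k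
        = (qfact_neg m * qint (Suc m) * q^(m+1)) * Qsum_term m k"
      unfolding mixed_moment_eq Qsum_term_def qfact.simps
      by (simp add: divide_simps qpower_expand del: qvar_power_neq_1, (simp add: algebra_simps)?)
  qed simp
  also have "\<dots> = 0"
    by (simp only: sum_distrib_left[symmetric] Qsum_term_sum mult_zero_right)
  finally show ?thesis .
qed

definition orthogonal_below :: "ratfun poly \<Rightarrow> nat \<Rightarrow> bool" where
  "orthogonal_below R n \<longleftrightarrow> (\<forall>g. (\<forall>i\<ge>n. coeff g i = 0) \<longrightarrow> moment \<beta> (pCons 0 (g * R)) = 0)"

lemma moment_pCons_0_smult_add:
  "moment \<beta> (pCons 0 ((smult s F + r) * R))
     = s * moment \<beta> (pCons 0 (F * R)) + moment \<beta> (pCons 0 (r * R))"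
  by (simp only: distrib_right mult_smult_left pCons_0_add pCons_0_smult moment_add moment_smult)

text \<open>
  A polynomial of degree \<open>\<le> m\<close> is a multiple of \<open>qfalling_poly m\<close> plus one of degree
  \<open>< m\<close>. The multiple is handled by the closed-form summations, the remainder by the
  recurrences and the induction hypothesis; \<open>c\<^sub>k \<noteq> 0\<close> is needed to divide out.
\<close>
lemma orthogonal_below_Ppoly_Suc:
  assumes P: "orthogonal_below (Ppoly m) m" and Q: "orthogonal_below (pCons 0 (Qpoly m)) m"
  shows "orthogonal_below (Ppoly (Suc m)) (Suc m)"
  unfolding orthogonal_below_def
proof (intro allI impI)
  fix g :: "ratfun poly"
  assume "\<forall>i\<ge>Suc m. coeff g i = 0"
  then obtain s r where g: "g = smult s (qfalling_poly m) + r" and r: "\<forall>i\<ge>m. coeff r i = 0"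
    by (rule qfalling_poly_decomp)
  have "cfc (2*m+2) * moment \<beta> (pCons 0 (r * Ppoly (Suc m)))
      = moment \<beta> (pCons 0 (r * (Ppoly m - pCons 0 (Qpoly m))))"
    using Ppoly_recurrence[of m]
    by (simp only: pCons_0_smult moment_smult[symmetric] mult_smult_right[symmetric])
      (simp add: algebra_simps)
  also have "\<dots> = moment \<beta> (pCons 0 (r * Ppoly m)) - moment \<beta> (pCons 0 (r * pCons 0 (Qpoly m)))"
    by (simp only: right_diff_distrib pCons_0_diff moment_diff)
  also have "\<dots> = 0"
    using P Q r unfolding orthogonal_below_def by simp
  finally have "moment \<beta> (pCons 0 (r * Ppoly (Suc m))) = 0"
    using cfc_neq_0[of "2*m+2"] by simp
  then show "moment \<beta> (pCons 0 (g * Ppoly (Suc m))) = 0"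
    unfolding g moment_pCons_0_smult_add moment_qfalling_poly_Ppoly by simp
qed

lemma orthogonal_below_xQpoly_Suc:
  assumes Q: "orthogonal_below (pCons 0 (Qpoly m)) m"
    and P': "orthogonal_below (Ppoly (Suc m)) (Suc m)"
  shows "orthogonal_below (pCons 0 (Qpoly (Suc m))) (Suc m)"
  unfolding orthogonal_below_def
proof (intro allI impI)
  fix g :: "ratfun poly"
  assume "\<forall>i\<ge>Suc m. coeff g i = 0"
  then obtain s r where g: "g = smult s (qfalling_poly m) + r" and r: "\<forall>i\<ge>m. coeff r i = 0"
    by (rule qfalling_poly_decomp)
  have xr: "\<forall>i\<ge>Suc m. coeff (pCons 0 r) i = 0"
    using r by (auto simp: coeff_pCons split: nat.splits)
  have "cfc (2*m+3) * moment \<beta> (pCons 0 (r * pCons 0 (Qpoly (Suc m))))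
      = moment \<beta> (pCons 0 (r * (pCons 0 (Qpoly m) - pCons 0 (Ppoly (Suc m)))))"
    using Qpoly_recurrence[of m]
    by (simp only: pCons_0_smult moment_smult[symmetric] mult_smult_right[symmetric])
      (simp add: algebra_simps)
  also have "\<dots> = moment \<beta> (pCons 0 (r * pCons 0 (Qpoly m)))
      - moment \<beta> (pCons 0 (pCons 0 r * Ppoly (Suc m)))"
    by (simp only: right_diff_distrib pCons_0_diff moment_diff mult.commute[of "pCons 0 r"]
        mult_pCons_left smult_0_left add_0 mult.commute[of r])
  also have "\<dots> = 0"
    using Q P' r xr unfolding orthogonal_below_def by (simp del: mult_pCons_left)
  finally have "moment \<beta> (pCons 0 (r * pCons 0 (Qpoly (Suc m)))) = 0"
    using cfc_neq_0[of "2*m+3"] by simp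
  then show "moment \<beta> (pCons 0 (g * pCons 0 (Qpoly (Suc m)))) = 0"
    unfolding g moment_pCons_0_smult_add moment_qfalling_poly_xQpoly by simp
qed

theorem orthogonal_below_Ppoly_xQpoly:
  "orthogonal_below (Ppoly m) m \<and> orthogonal_below (pCons 0 (Qpoly m)) m"
proof (induction m)
  case 0
  have g: "g = 0" if "\<forall>i. coeff g i = 0" for g :: "ratfun poly"
    using that by (simp add: poly_eqI)
  show ?case
    unfolding orthogonal_below_def by (auto dest: g)
next
  case (Suc m)
  then show ?case
    using orthogonal_below_Ppoly_Suc orthogonal_below_xQpoly_Suc by blast
qed

end

subsection \<open>Continued fractions from three-term recurrences of power series\<close>

lemma fps_mult_nth_eq_0:
  fixes A D :: "'a::comm_semiring_0 fps"
  assumes "\<forall>j<N. D $ j = 0" and "k < N"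
  shows "(A * D) $ k = 0"
  using assms by (auto simp: fps_mult_nth intro!: sum.neutral)

lemma fps_inverse_nth_eq:
  fixes F G :: "'a::field fps"
  assumes F0: "F $ 0 \<noteq> 0" and FG: "\<forall>j<N. F $ j = G $ j" and k: "k < N"
  shows "inverse F $ k = inverse G $ k"
proof -
  have G0: "G $ 0 \<noteq> 0"
    using F0 FG k by (metis le0 le_less_trans)
  have "inverse F - inverse G = inverse F * (inverse G * G) - inverse G * (inverse F * F)"
    using F0 G0 by (simp add: inverse_mult_eq_1)
  also have "\<dots> = inverse F * inverse G * (G - F)"
    by (simp add: algebra_simps)
  finally have "(inverse F - inverse G) $ k = (inverse F * inverse G * (G - F)) $ k"
    by simp
  also have "\<dots> = 0"
    using FG k by (intro fps_mult_nth_eq_0[of N]) auto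
  finally show ?thesis
    by simp
qed

lemma fps_const_mult_X_nth:
  "(fps_const c * fps_X * (F :: 'a::comm_ring_1 fps)) $ n = (if n = 0 then 0 else c * F $ (n - 1))"
  by (simp add: mult.assoc)

text \<open>
  The recurrence gives \<open>K\<^sub>i\<^sub>+\<^sub>1/K\<^sub>i = 1/(1 + c\<^sub>i\<^sub>+\<^sub>1 x (K\<^sub>i\<^sub>+\<^sub>2/K\<^sub>i\<^sub>+\<^sub>1))\<close>, the recursion defining
  \<open>cfrac\<close>; each unfolding step fixes one more coefficient.
\<close>
lemma cfrac_nth_eq_ratio:
  fixes K :: "nat \<Rightarrow> 'a::field fps"
  assumes K0: "K 0 $ 0 \<noteq> 0"
    and rec: "\<And>i. K i = K (Suc i) + fps_const (c (Suc i)) * fps_X * K (Suc (Suc i))"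
  shows "n < N \<Longrightarrow> cfrac c (Suc i) N $ n = (K (Suc i) * inverse (K i)) $ n"
proof (induction N arbitrary: i n)
  case 0
  then show ?case
    by simp
next
  case (Suc N)
  have K_0: "K i $ 0 = K 0 $ 0" for i
  proof (induction i)
    case (Suc i)
    then show ?case
      using arg_cong[OF rec[of i], of "\<lambda>F. F $ 0"] by (simp add: fps_const_mult_X_nth)
  qed simp
  let ?C = "fps_const (c (Suc i)) * fps_X"
  let ?F = "1 + ?C * cfrac c (Suc (Suc i)) N"
  let ?G = "1 + ?C * (K (Suc (Suc i)) * inverse (K (Suc i)))"
  have "?F $ k = ?G $ k" if "k < Suc N" for k
    using that Suc.IH[of "k - 1" "Suc i"] by (cases k) (simp_all add: fps_const_mult_X_nth)
  then have "inverse ?F $ n = inverse ?G $ n"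
    using Suc.prems by (intro fps_inverse_nth_eq[of _ "Suc N"]) (simp_all add: fps_const_mult_X_nth)
  also have "inverse ?G = K (Suc i) * inverse (K i)"
  proof -
    have b0: "K (Suc i) $ 0 \<noteq> 0"
      using K0 K_0[of "Suc i"] by simp
    have "?G = (K (Suc i) + ?C * K (Suc (Suc i))) * inverse (K (Suc i))"
      using b0 by (simp add: algebra_simps inverse_mult_eq_1')
    also have "\<dots> = K i * inverse (K (Suc i))"
      using rec[of i] by simp
    finally show ?thesis
      using b0 by (simp add: fps_inverse_mult mult.commute)
  qed
  finally show ?case
    by simp
qed


context qBC
begin

definition moment_series :: "ratfun poly \<Rightarrow> ratfun fps" where
  "moment_series R = Abs_fps (\<lambda>n. moment \<beta> (pCons 0 (monom 1 n * R)) / \<beta> 1)"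

text \<open>\<open>tail_series (2m+1)\<close> and \<open>tail_series (2m+2)\<close> are the series \<open>K\<^sub>i\<close> of the proof idea.\<close>
definition tail_series :: "nat \<Rightarrow> ratfun fps" where
  "tail_series i =
    (if i = 0 then 1
     else if odd i then fps_shift ((i - 1) div 2) (moment_series (Ppoly ((i - 1) div 2)))
     else fps_shift ((i - 2) div 2) (moment_series (pCons 0 (Qpoly ((i - 2) div 2)))))"

lemma tail_series_0: "tail_series 0 = 1"
  by (simp add: tail_series_def)

lemma tail_series_odd: "tail_series (2*m+1) = fps_shift m (moment_series (Ppoly m))"
  by (simp add: tail_series_def)

lemma tail_series_even: "tail_series (2*m+2) = fps_shift m (moment_series (pCons 0 (Qpoly m)))"
  by (simp add: tail_series_def)

lemma moment_series_nth: "moment_series R $ n = moment \<beta> (pCons 0 (monom 1 n * R)) / \<beta> 1"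
  by (simp add: moment_series_def)

lemma moment_series_add_nth: "moment_series (A + B) $ n = moment_series A $ n + moment_series B $ n"
  by (simp only: moment_series_nth distrib_left pCons_0_add moment_add add_divide_distrib)

lemma moment_series_smult_nth: "moment_series (smult c A) $ n = c * moment_series A $ n"
  by (simp only: moment_series_nth mult_smult_right pCons_0_smult moment_smult times_divide_eq_right)

lemma moment_series_pCons_0_nth: "moment_series (pCons 0 R) $ n = moment_series R $ Suc n"
proof -
  have "monom (1::ratfun) n * pCons 0 R = monom 1 (Suc n) * R"
    by (simp add: monom_Suc)
  then show ?thesis
    by (simp only: moment_series_nth)
qed

lemma moment_series_Ppoly_nth_eq_0: "n < m \<Longrightarrow> moment_series (Ppoly m) $ n = 0"
  using orthogonal_below_Ppoly_xQpoly[of m]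
  by (auto simp: orthogonal_below_def moment_series_nth)

lemma moment_series_xQpoly_nth_eq_0: "n < m \<Longrightarrow> moment_series (pCons 0 (Qpoly m)) $ n = 0"
  using orthogonal_below_Ppoly_xQpoly[of m]
  by (auto simp: orthogonal_below_def moment_series_nth simp del: mult_pCons_right)

lemma tail_series_recurrence_0:
  "tail_series 0 = tail_series 1 + fps_const (cfc 1) * fps_X * tail_series 2"
proof (rule fps_ext)
  fix n
  have K1: "tail_series 1 = moment_series 1"
    using tail_series_odd[of 0] by (simp add: Ppoly_def pCons_one)
  have K2: "tail_series 2 = moment_series (pCons 0 (smult (Qnorm 0) 1))"
    using tail_series_even[of 0] by (simp add: Qpoly_def numeral_eq_Suc del: smult_pCons)
  have Suc: "moment_series 1 $ Suc j + cfc 1 * moment_series (pCons 0 (smult (Qnorm 0) 1)) $ j = 0"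
    for j
  proof -
    have "moment_series 1 $ Suc j + cfc 1 * moment_series (pCons 0 (smult (Qnorm 0) 1)) $ j
        = moment_series 1 $ Suc j * (1 + cfc 1 * Qnorm 0)"
      by (simp only: moment_series_pCons_0_nth moment_series_smult_nth) (simp add: algebra_simps)
    also have "1 + cfc 1 * Qnorm 0 = 0"
      by (simp add: cfc_def Qnorm_def numeral_eq_Suc)
    finally show ?thesis
      by simp
  qed
  have "moment_series 1 $ 0 = 1"
    using beta_1_neq_0 moment_monom[of \<beta> 1 1] by (simp add: moment_series_nth monom_Suc monom_0)
  with Suc show "tail_series 0 $ n = (tail_series 1 + fps_const (cfc 1) * fps_X * tail_series 2) $ n"
    unfolding K1 K2 tail_series_0 by (cases n) (simp_all add: fps_const_mult_X_nth)
qed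

lemma tail_series_recurrence_odd:
  "tail_series (2*m+1)
     = tail_series (2*m+2) + fps_const (cfc (2*m+2)) * fps_X * tail_series (2 * Suc m + 1)"
proof (rule fps_ext)
  fix n
  have P: "moment_series (Ppoly m) $ j
      = moment_series (pCons 0 (Qpoly m)) $ j + cfc (2*m+2) * moment_series (Ppoly (Suc m)) $ j" for j
    by (subst Ppoly_recurrence) (simp only: moment_series_add_nth moment_series_smult_nth)
  show "tail_series (2*m+1) $ n
      = (tail_series (2*m+2) + fps_const (cfc (2*m+2)) * fps_X * tail_series (2 * Suc m + 1)) $ n"
    unfolding tail_series_odd tail_series_even
    using P[of "n+m"] moment_series_Ppoly_nth_eq_0[of m "Suc m"]
    by (cases n) (simp_all add: fps_const_mult_X_nth)
qed

lemma tail_series_recurrence_even: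
  "tail_series (2*m+2)
     = tail_series (2 * Suc m + 1) + fps_const (cfc (2*m+3)) * fps_X * tail_series (2 * Suc m + 2)"
proof (rule fps_ext)
  fix n
  have Q: "moment_series (Qpoly m) $ j
      = moment_series (Ppoly (Suc m)) $ j + cfc (2*m+3) * moment_series (Qpoly (Suc m)) $ j" for j
    by (subst Qpoly_recurrence) (simp only: moment_series_add_nth moment_series_smult_nth)
  show "tail_series (2*m+2) $ n
      = (tail_series (2 * Suc m + 1) + fps_const (cfc (2*m+3)) * fps_X * tail_series (2 * Suc m + 2)) $ n"
    unfolding tail_series_odd tail_series_even
    using Q[of "Suc (n+m)"] moment_series_xQpoly_nth_eq_0[of m "Suc m"]
    by (cases n) (simp_all add: fps_const_mult_X_nth moment_series_pCons_0_nth)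
qed

theorem tail_series_recurrence:
  "tail_series i = tail_series (Suc i) + fps_const (cfc (Suc i)) * fps_X * tail_series (Suc (Suc i))"
proof -
  consider "i = 0" | m where "i = 2*m+1" | m where "i = 2*m+2"
    by (metis One_nat_def add_2_eq_Suc' add_Suc_right nat.exhaust oddE even_Suc evenE)
  then show ?thesis
  proof cases
    case 1
    then show ?thesis
      using tail_series_recurrence_0 by (simp add: numeral_eq_Suc)
  next
    case 2
    then show ?thesis
      using tail_series_recurrence_odd[of m] by (simp add: numeral_eq_Suc)
  next
    case 3
    then show ?thesis
      using tail_series_recurrence_even[of m] by (simp add: numeral_eq_Suc)
  qed
qed

lemma tail_series_1_nth: "tail_series (Suc 0) $ n = \<beta> (n + 1) / \<beta> 1"
  using tail_series_odd[of 0]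
  by (simp add: Ppoly_def moment_series_nth monom_Suc[symmetric] moment_monom)

end

theorem mainTheorem9:
  fixes \<beta> :: "nat \<Rightarrow> ratfun"
  assumes "is_qBC \<beta>"
  shows "(\<lambda>N. cfrac cfc 1 N) \<longlonglongrightarrow> Abs_fps (\<lambda>n. \<beta> (n + 1) / \<beta> 1)"
proof (rule tendsto_fpsI)
  interpret qBC \<beta>
    using assms by unfold_locales
  fix n
  have "cfrac cfc 1 N $ n = \<beta> (n + 1) / \<beta> 1" if "n < N" for N
    using cfrac_nth_eq_ratio[of tail_series cfc, OF _ tail_series_recurrence that, of 0]
    by (simp add: tail_series_0 tail_series_1_nth)
  then show "eventually (\<lambda>N. cfrac cfc 1 N $ n = Abs_fps (\<lambda>n. \<beta> (n + 1) / \<beta> 1) $ n) sequentially"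
    by (intro eventually_sequentiallyI[of "Suc n"]) simp
qed

end
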